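(* Let $\mu>0$, $T_s>0$, $T_w>0$, let $Q_w\ge 1$ be an integer, and for $\rho\in(0,1)$ define $$f(\rho)=\frac{\Gamma(Q_w+1,\mu\rho T_s)-\mu\rho T_s\,\Gamma(Q_w,\mu\rho T_s)}{\mu\rho\,\Gamma(Q_w)},$$ and $b=T_s+T_w$, where $\Gamma(\cdot)$ is the Gamma function and $\Gamma(s,x)=\int_x^\infty u^{s-1}e^{-u}\,du$ is the upper incomplete Gamma function. Then $f''(\rho)\bigl(f(\rho)+b\bigr)\ge 2\bigl(f'(\rho)\bigr)^2$ for all $\rho\in(0,1)$; consequently, for any $\sigma_{\mathrm{off}}\in[0,1)$, the function $E(\rho)=1-(1-\sigma_{\mathrm{off}})(1-\rho)\dfrac{f(\rho)}{f(\rho)+T_s+T_w}$ is concave on $(0,1)$.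
   Context: This $f$ is the exact mean low-power time of an Energy Efficient Ethernet link under the "burst transmission" policy in the high-load regime with Poisson arrivals at normalized load $\rho$, where $\mu^{-1}$ is the mean packet transmission time, $T_s,T_w$ are the sleep and wake transition times, $Q_w$ is the burst size threshold, and $\sigma_{\mathrm{off}}$ is the relative power in the idle state; $E(\rho)$ is the normalized link energy consumption. *)

theory Defs
  imports "HOL-Analysis.Analysis"
begin

definition upper_Gamma :: "real \<Rightarrow> real \<Rightarrow> real" where
  "upper_Gamma s x = integral {x..} (\<lambda>u. u powr (s - 1) * exp (- u))"

definition eee_f :: "real \<Rightarrow> real \<Rightarrow> nat \<Rightarrow> real \<Rightarrow> real" where
  "eee_f \<mu> Ts Qw \<rho> =
     (upper_Gamma (real Qw + 1) (\<mu> * \<rho> * Ts)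
        - \<mu> * \<rho> * Ts * upper_Gamma (real Qw) (\<mu> * \<rho> * Ts))
     / (\<mu> * \<rho> * Gamma (real Qw))"

definition eee_E :: "real \<Rightarrow> real \<Rightarrow> real \<Rightarrow> nat \<Rightarrow> real \<Rightarrow> real \<Rightarrow> real" where
  "eee_E \<mu> Ts Tw Qw \<sigma> \<rho> =
     1 - (1 - \<sigma>) * (1 - \<rho>) * (eee_f \<mu> Ts Qw \<rho> / (eee_f \<mu> Ts Qw \<rho> + Ts + Tw))"

end

theory Submission
  imports Defs
begin

text \<open>
  For integer \<open>Q = Qw\<close> the incomplete Gamma functions are elementary: with \<open>x = \<mu> Ts \<rho>\<close> one
  gets \<open>f(\<rho>) = Ts \<phi>(x) / x\<close>, where \<open>\<phi>(x) = E (Q - N)\<^sup>+\<close> for a Poisson variable \<open>N\<close> of mean \<open>x\<close>.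
  Hence \<open>\<phi> \<ge> 0\<close>, \<open>\<phi>' = -P(N < Q) \<in> [-1, 0]\<close> and \<open>\<phi>'' = P(N = Q - 1) \<ge> 0\<close>. After clearing
  denominators, \<open>f''(f + b) - 2 f'\<^sup>2\<close> becomes a positive multiple of
  \<open>x\<^sup>2\<phi>''(\<phi> + \<beta>x) + 2(\<phi> - x\<phi>') x (\<phi>' + \<beta>)\<close> with \<open>\<beta> = b/Ts \<ge> 1\<close>, a sum of products of
  nonnegative factors. This inequality is exactly the convexity of \<open>f/(f + b)\<close>; since moreover
  \<open>f' \<le> 0\<close>, the product \<open>(1 - \<rho>) f/(f + b)\<close> is convex as well, and \<open>E\<close> is concave.
\<close>

definition exp_partial_sum :: "nat \<Rightarrow> real \<Rightarrow> real" where
  "exp_partial_sum n x = (\<Sum>k<n. x ^ k / fact k)"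

lemma exp_partial_sum_Suc: "exp_partial_sum (Suc n) x = exp_partial_sum n x + x ^ n / fact n"
  by (simp add: exp_partial_sum_def)

lemma has_field_derivative_exp_partial_sum:
  "(exp_partial_sum (Suc n) has_field_derivative exp_partial_sum n x) (at x)"
proof (induction n)
  case 0
  then show ?case by (simp add: exp_partial_sum_def)
next
  case (Suc n)
  have "((\<lambda>x. exp_partial_sum (Suc n) x + x ^ Suc n / fact (Suc n)) has_field_derivative
          exp_partial_sum n x + real (Suc n) * x ^ n / fact (Suc n)) (at x)"
    by (rule derivative_eq_intros Suc refl | simp)+
  moreover have "real (Suc n) * x ^ n / fact (Suc n) = x ^ n / fact n"
    by (simp add: field_simps del: of_nat_Suc)
  ultimately show ?case
    by (simp add: exp_partial_sum_Suc[abs_def])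
qed

lemma exp_partial_sum_nonneg: "x \<ge> 0 \<Longrightarrow> 0 \<le> exp_partial_sum n x"
  unfolding exp_partial_sum_def by (intro sum_nonneg) auto

lemma exp_partial_sum_le_exp:
  assumes "x \<ge> 0"
  shows "exp_partial_sum n x \<le> exp x"
proof -
  have "exp_partial_sum n x = (\<Sum>k<n. x ^ k /\<^sub>R fact k)"
    by (simp add: exp_partial_sum_def field_simps)
  also have "\<dots> \<le> (\<Sum>k. x ^ k /\<^sub>R fact k)"
    by (rule sum_le_suminf) (use exp_converges[of x] assms in \<open>auto simp: sums_iff\<close>)
  also have "\<dots> = exp x"
    using exp_converges[of x] by (simp add: sums_iff)
  finally show ?thesis .
qed

lemma exp_partial_sum_times_coeff:
  "c * exp_partial_sum (Suc n) x - x * exp_partial_sum n x = (\<Sum>k\<le>n. (c - real k) * x ^ k / fact k)"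
proof (induction n)
  case 0
  then show ?case by (simp add: exp_partial_sum_def)
next
  case (Suc n)
  have "x * x ^ n / fact n = real (Suc n) * x ^ Suc n / fact (Suc n)"
    by (simp add: field_simps del: of_nat_Suc)
  then have "c * exp_partial_sum (Suc (Suc n)) x - x * exp_partial_sum (Suc n) x
      = (c * exp_partial_sum (Suc n) x - x * exp_partial_sum n x) + (c - real (Suc n)) * x ^ Suc n / fact (Suc n)"
    by (simp add: exp_partial_sum_Suc algebra_simps diff_divide_distrib)
  then show ?case
    using Suc by simp
qed

lemma upper_Gamma_of_nat:
  fixes x :: real
  assumes x: "x > 0"
  shows "upper_Gamma (real (Suc m)) x = fact m * exp (- x) * exp_partial_sum (Suc m) x"
proof -
  define F where "F u = - fact m * exp (- u) * exp_partial_sum (Suc m) u" for u :: real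
  define g where "g u = u ^ m * exp (- u)" for u :: real
  have dF: "(F has_field_derivative g u) (at u)" for u
    unfolding F_def g_def
    by (rule derivative_eq_intros has_field_derivative_exp_partial_sum refl | simp)+
       (simp add: exp_partial_sum_Suc algebra_simps)
  have "((\<lambda>u::real. - fact m * (\<Sum>k<Suc m. u ^ k / exp u / fact k)) \<longlongrightarrow> - fact m * (\<Sum>k<Suc m. 0)) at_top"
    by (intro tendsto_mult_left tendsto_sum tendsto_divide_zero tendsto_power_div_exp_0)
  moreover have "F = (\<lambda>u. - fact m * (\<Sum>k<Suc m. u ^ k / exp u / fact k))"
    by (auto simp: F_def exp_partial_sum_def fun_eq_iff sum_distrib_left exp_minus field_simps)
  ultimately have F_at_top: "(F \<longlongrightarrow> 0) at_top"
    by simp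
  have F_at_x: "((F \<circ> real_of_ereal) \<longlongrightarrow> F x) (at_right (ereal x))"
    unfolding ereal_tendsto_simps
    using DERIV_isCont[OF dF, of x] by (simp add: isCont_def filterlim_at_split)
  have F_at_infinity: "((F \<circ> real_of_ereal) \<longlongrightarrow> 0) (at_left \<infinity>)"
    unfolding ereal_tendsto_simps by (rule F_at_top)
  have FTC: "set_integrable lborel (einterval (ereal x) \<infinity>) g"
       "(LBINT u=ereal x..\<infinity>. g u) = 0 - F x"
    by (rule interval_integral_FTC_nonneg[OF _ dF _ _ F_at_x F_at_infinity];
        use x in \<open>auto simp: g_def intro!: continuous_intros\<close>)+
  then have "integral {x<..} g = - F x"
    using set_borel_integral_eq_integral(2)[OF FTC(1)] by (simp add: interval_lebesgue_integral_def)
  moreover have "integral {x..} (\<lambda>u. u powr (real (Suc m) - 1) * exp (- u)) = integral {x..} g"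
    by (rule integral_cong) (use x in \<open>auto simp: g_def powr_realpow\<close>)
  moreover have "integral {x..} g = integral {x<..} g"
    by (rule integral_spike_set) (auto intro: negligible_subset[OF negligible_sing])
  ultimately show ?thesis
    by (simp add: upper_Gamma_def F_def)
qed

definition poisson_shortfall :: "nat \<Rightarrow> real \<Rightarrow> real" where
  "poisson_shortfall Q x = exp (- x) * (\<Sum>k\<le>Q. (real Q - real k) * x ^ k / fact k)"

lemma poisson_shortfall_eq_partial_sums:
  "poisson_shortfall Q x = exp (- x) * (real Q * exp_partial_sum (Suc Q) x - x * exp_partial_sum Q x)"
  by (simp add: poisson_shortfall_def exp_partial_sum_times_coeff)

lemma poisson_shortfall_nonneg: "x \<ge> 0 \<Longrightarrow> poisson_shortfall Q x \<ge> 0"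
  unfolding poisson_shortfall_def by (intro mult_nonneg_nonneg sum_nonneg) auto

lemma has_field_derivative_poisson_shortfall:
  "(poisson_shortfall (Suc m) has_field_derivative - (exp (- x) * exp_partial_sum (Suc m) x)) (at x)"
proof -
  have "(poisson_shortfall (Suc m) has_field_derivative
          - exp (- x) * (real (Suc m) * exp_partial_sum (Suc (Suc m)) x - x * exp_partial_sum (Suc m) x)
          + exp (- x) * (real (Suc m) * exp_partial_sum (Suc m) x
              - (1 * exp_partial_sum (Suc m) x + x * exp_partial_sum m x))) (at x)"
    unfolding poisson_shortfall_eq_partial_sums[abs_def]
    by (rule derivative_eq_intros has_field_derivative_exp_partial_sum refl | simp)+
  then show ?thesis
    by (rule DERIV_cong) (simp add: exp_partial_sum_Suc field_simps del: of_nat_Suc)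
qed

lemma has_field_derivative_neg_exp_times_partial_sum:
  "((\<lambda>x. - (exp (- x) * exp_partial_sum (Suc m) x)) has_field_derivative exp (- x) * x ^ m / fact m) (at x)"
proof -
  have "((\<lambda>x. - (exp (- x) * exp_partial_sum (Suc m) x)) has_field_derivative
          - (- exp (- x) * exp_partial_sum (Suc m) x + exp (- x) * exp_partial_sum m x)) (at x)"
    by (rule derivative_eq_intros has_field_derivative_exp_partial_sum refl | simp)+
  then show ?thesis
    by (rule DERIV_cong) (simp add: exp_partial_sum_Suc field_simps)
qed

lemma exp_neg_times_partial_sum_le_1:
  assumes "x \<ge> 0"
  shows "exp (- x) * exp_partial_sum n x \<le> 1"
proof -
  have "exp (- x) * exp_partial_sum n x \<le> exp (- x) * exp x"
    using exp_partial_sum_le_exp[OF assms] by (intro mult_left_mono) auto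
  then show ?thesis
    by (simp add: exp_minus)
qed

lemma eee_f_eq_poisson_shortfall:
  assumes "\<mu> > 0" "Ts > 0" "\<rho> > 0"
  shows "eee_f \<mu> Ts (Suc m) \<rho> = Ts * (poisson_shortfall (Suc m) (\<mu> * Ts * \<rho>) / (\<mu> * Ts * \<rho>))"
proof -
  have x: "\<mu> * \<rho> * Ts > 0"
    using assms by simp
  have Gamma: "Gamma (real (Suc m)) = fact m"
    using Gamma_fact[of m, where 'a = real] by (simp add: add.commute)
  have Suc_Suc: "real (Suc m) + 1 = real (Suc (Suc m))"
    by simp
  show ?thesis
    unfolding eee_f_def Suc_Suc upper_Gamma_of_nat[OF x] Gamma poisson_shortfall_eq_partial_sums
    using assms by (simp add: field_simps del: of_nat_Suc)
qed

lemma has_field_derivative_divide_ident: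
  fixes \<phi> :: "real \<Rightarrow> real"
  assumes "(\<phi> has_field_derivative d) (at x)" and "x \<noteq> 0"
  shows "((\<lambda>x. \<phi> x / x) has_field_derivative (x * d - \<phi> x) / x\<^sup>2) (at x)"
  using DERIV_divide[OF assms(1) DERIV_ident assms(2)]
  by (simp add: power2_eq_square algebra_simps)

lemma has_field_derivative_divide_ident_derivative:
  fixes \<phi> \<phi>' :: "real \<Rightarrow> real"
  assumes "(\<phi> has_field_derivative \<phi>' x) (at x)" and "(\<phi>' has_field_derivative d) (at x)"
    and "x \<noteq> 0"
  shows "((\<lambda>x. (x * \<phi>' x - \<phi> x) / x\<^sup>2) has_field_derivative
           (x\<^sup>2 * d - 2 * (x * \<phi>' x - \<phi> x)) / x ^ 3) (at x)"
proof -
  have "((\<lambda>x. (x * \<phi>' x - \<phi> x) / x\<^sup>2) has_field_derivative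
          ((1 * \<phi>' x + x * d - \<phi>' x) * x\<^sup>2 - (x * \<phi>' x - \<phi> x) * (2 * x)) / (x\<^sup>2 * x\<^sup>2)) (at x)"
    using assms by (auto intro!: derivative_eq_intros)
  then show ?thesis
    by (rule DERIV_cong) (use assms(3) in \<open>simp add: field_simps power2_eq_square power3_eq_cube\<close>)
qed

lemma curvature_inequality_divide_ident:
  fixes x \<beta> p p' p'' :: real
  assumes "x > 0" "\<beta> \<ge> 1" "p \<ge> 0" "-1 \<le> p'" "p' \<le> 0" "p'' \<ge> 0"
  shows "2 * ((x * p' - p) / x\<^sup>2)\<^sup>2 \<le> (x\<^sup>2 * p'' - 2 * (x * p' - p)) / x ^ 3 * (p / x + \<beta>)"
proof -
  define N where "N = x * p' - p"
  have "(x\<^sup>2 * p'' - 2 * N) * (p + \<beta> * x) - 2 * N\<^sup>2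
      = x\<^sup>2 * p'' * (p + \<beta> * x) + 2 * (p - x * p') * x * (p' + \<beta>)"
    by (simp add: N_def algebra_simps power2_eq_square)
  also have "\<dots> \<ge> 0"
  proof -
    have "p - x * p' \<ge> 0" and "p' + \<beta> \<ge> 0"
      using assms mult_nonneg_nonpos[of x p'] by auto
    then show ?thesis
      using assms by simp
  qed
  finally have "2 * N\<^sup>2 / x ^ 4 \<le> (x\<^sup>2 * p'' - 2 * N) * (p + \<beta> * x) / x ^ 4"
    by (simp add: divide_right_mono)
  moreover have "2 * (N / x\<^sup>2)\<^sup>2 = 2 * N\<^sup>2 / x ^ 4"
    by (simp add: power_divide flip: power_mult)
  moreover have "(x\<^sup>2 * p'' - 2 * N) / x ^ 3 * (p / x + \<beta>) = (x\<^sup>2 * p'' - 2 * N) * (p + \<beta> * x) / x ^ 4"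
    using assms(1) by (simp add: field_simps power3_eq_cube power4_eq_xxxx power2_eq_square)
  ultimately show ?thesis
    by (simp add: N_def)
qed

locale scaled_ratio =
  fixes \<phi> \<phi>' \<phi>'' :: "real \<Rightarrow> real" and a c :: real and f :: "real \<Rightarrow> real"
  assumes has_derivative_\<phi>: "\<And>x. x > 0 \<Longrightarrow> (\<phi> has_field_derivative \<phi>' x) (at x)"
    and has_derivative_\<phi>': "\<And>x. x > 0 \<Longrightarrow> (\<phi>' has_field_derivative \<phi>'' x) (at x)"
    and a_pos: "a > 0" and c_pos: "c > 0"
    and f_eq: "\<And>\<rho>. \<rho> > 0 \<Longrightarrow> f \<rho> = a * (\<phi> (c * \<rho>) / (c * \<rho>))"
begin

lemma has_derivative_f:
  assumes "\<rho> > 0"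
  shows "(f has_field_derivative
           a * c * ((c * \<rho>) * \<phi>' (c * \<rho>) - \<phi> (c * \<rho>)) / (c * \<rho>)\<^sup>2) (at \<rho>)"
proof -
  have x: "c * \<rho> > 0"
    using assms c_pos by simp
  have "((\<lambda>\<rho>. a * (\<phi> (c * \<rho>) / (c * \<rho>))) has_field_derivative
          a * (((c * \<rho>) * \<phi>' (c * \<rho>) - \<phi> (c * \<rho>)) / (c * \<rho>)\<^sup>2 * (c * 1))) (at \<rho>)"
    using x by (intro DERIV_cmult DERIV_chain2[OF has_field_derivative_divide_ident]
                  has_derivative_\<phi> DERIV_ident) auto
  then have "((\<lambda>\<rho>. a * (\<phi> (c * \<rho>) / (c * \<rho>))) has_field_derivative
          a * c * ((c * \<rho>) * \<phi>' (c * \<rho>) - \<phi> (c * \<rho>)) / (c * \<rho>)\<^sup>2) (at \<rho>)"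
    by (rule DERIV_cong) (simp add: algebra_simps)
  then show ?thesis
    by (rule has_field_derivative_transform_within_open[where S = "{0<..}"])
       (use assms f_eq in auto)
qed

lemma deriv_f:
  "\<rho> > 0 \<Longrightarrow> deriv f \<rho> = a * c * ((c * \<rho>) * \<phi>' (c * \<rho>) - \<phi> (c * \<rho>)) / (c * \<rho>)\<^sup>2"
  by (rule DERIV_imp_deriv[OF has_derivative_f])

lemma has_derivative_deriv_f:
  assumes "\<rho> > 0"
  shows "(deriv f has_field_derivative
           a * c\<^sup>2 * ((c * \<rho>)\<^sup>2 * \<phi>'' (c * \<rho>) - 2 * ((c * \<rho>) * \<phi>' (c * \<rho>) - \<phi> (c * \<rho>)))
             / (c * \<rho>) ^ 3) (at \<rho>)"
proof -
  have x: "c * \<rho> > 0"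
    using assms c_pos by simp
  have "((\<lambda>\<rho>. a * c * (((c * \<rho>) * \<phi>' (c * \<rho>) - \<phi> (c * \<rho>)) / (c * \<rho>)\<^sup>2)) has_field_derivative
          a * c * (((c * \<rho>)\<^sup>2 * \<phi>'' (c * \<rho>) - 2 * ((c * \<rho>) * \<phi>' (c * \<rho>) - \<phi> (c * \<rho>)))
             / (c * \<rho>) ^ 3 * (c * 1))) (at \<rho>)"
    using x by (intro DERIV_cmult DERIV_chain2[OF has_field_derivative_divide_ident_derivative]
                  has_derivative_\<phi> has_derivative_\<phi>' DERIV_ident) auto
  then have "((\<lambda>\<rho>. a * c * (((c * \<rho>) * \<phi>' (c * \<rho>) - \<phi> (c * \<rho>)) / (c * \<rho>)\<^sup>2)) has_field_derivative
           a * c\<^sup>2 * ((c * \<rho>)\<^sup>2 * \<phi>'' (c * \<rho>) - 2 * ((c * \<rho>) * \<phi>' (c * \<rho>) - \<phi> (c * \<rho>)))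
             / (c * \<rho>) ^ 3) (at \<rho>)"
    by (rule DERIV_cong) (simp add: power2_eq_square)
  then show ?thesis
    by (rule has_field_derivative_transform_within_open[where S = "{0<..}"])
       (use assms deriv_f in \<open>auto simp: power2_eq_square\<close>)
qed

lemma deriv_deriv_f:
  "\<rho> > 0 \<Longrightarrow> deriv (deriv f) \<rho> =
     a * c\<^sup>2 * ((c * \<rho>)\<^sup>2 * \<phi>'' (c * \<rho>) - 2 * ((c * \<rho>) * \<phi>' (c * \<rho>) - \<phi> (c * \<rho>))) / (c * \<rho>) ^ 3"
  by (rule DERIV_imp_deriv[OF has_derivative_deriv_f])

lemma f_has_derivative_deriv: "\<rho> > 0 \<Longrightarrow> (f has_field_derivative deriv f \<rho>) (at \<rho>)"
  using has_derivative_f deriv_f by simp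

lemma deriv_f_has_derivative_deriv:
  "\<rho> > 0 \<Longrightarrow> (deriv f has_field_derivative deriv (deriv f) \<rho>) (at \<rho>)"
  using has_derivative_deriv_f deriv_deriv_f by simp

end

locale convex_scaled_ratio = scaled_ratio +
  assumes \<phi>_nonneg: "\<And>x. x > 0 \<Longrightarrow> \<phi> x \<ge> 0"
    and \<phi>'_bounds: "\<And>x. x > 0 \<Longrightarrow> -1 \<le> \<phi>' x \<and> \<phi>' x \<le> 0"
    and \<phi>''_nonneg: "\<And>x. x > 0 \<Longrightarrow> \<phi>'' x \<ge> 0"
begin

lemma f_nonneg: "\<rho> > 0 \<Longrightarrow> f \<rho> \<ge> 0"
  using f_eq \<phi>_nonneg a_pos c_pos by simp

lemma deriv_f_nonpos:
  assumes "\<rho> > 0"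
  shows "deriv f \<rho> \<le> 0"
proof -
  have x: "c * \<rho> > 0"
    using assms c_pos by simp
  then have "(c * \<rho>) * \<phi>' (c * \<rho>) - \<phi> (c * \<rho>) \<le> 0"
    using \<phi>_nonneg \<phi>'_bounds mult_nonneg_nonpos[of "c * \<rho>" "\<phi>' (c * \<rho>)"] by force
  then show ?thesis
    using assms a_pos c_pos
    by (simp add: deriv_f divide_nonpos_pos mult_nonneg_nonpos)
qed

lemma curvature_inequality:
  assumes "\<rho> > 0" and "b \<ge> a"
  shows "2 * (deriv f \<rho>)\<^sup>2 \<le> deriv (deriv f) \<rho> * (f \<rho> + b)"
proof -
  define x where "x = c * \<rho>"
  have x: "x > 0"
    using assms c_pos by (simp add: x_def)
  have "2 * ((x * \<phi>' x - \<phi> x) / x\<^sup>2)\<^sup>2 \<le> (x\<^sup>2 * \<phi>'' x - 2 * (x * \<phi>' x - \<phi> x)) / x ^ 3 * (\<phi> x / x + b / a)"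
    using x assms a_pos \<phi>_nonneg \<phi>'_bounds \<phi>''_nonneg
    by (intro curvature_inequality_divide_ident) auto
  then have "(a * c)\<^sup>2 * (2 * ((x * \<phi>' x - \<phi> x) / x\<^sup>2)\<^sup>2)
      \<le> (a * c)\<^sup>2 * ((x\<^sup>2 * \<phi>'' x - 2 * (x * \<phi>' x - \<phi> x)) / x ^ 3 * (\<phi> x / x + b / a))"
    by (rule mult_left_mono) simp
  moreover have "2 * (deriv f \<rho>)\<^sup>2 = (a * c)\<^sup>2 * (2 * ((x * \<phi>' x - \<phi> x) / x\<^sup>2)\<^sup>2)"
    using assms by (simp add: deriv_f x_def[symmetric] power_mult_distrib power_divide)
  moreover have "deriv (deriv f) \<rho> * (f \<rho> + b)
      = (a * c)\<^sup>2 * ((x\<^sup>2 * \<phi>'' x - 2 * (x * \<phi>' x - \<phi> x)) / x ^ 3 * (\<phi> x / x + b / a))"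
  proof -
    have "deriv (deriv f) \<rho> = a * c\<^sup>2 * ((x\<^sup>2 * \<phi>'' x - 2 * (x * \<phi>' x - \<phi> x)) / x ^ 3)"
      using deriv_deriv_f[OF assms(1)] by (simp add: x_def)
    moreover have "f \<rho> + b = a * (\<phi> x / x + b / a)"
      using f_eq[OF assms(1)] a_pos by (simp add: x_def field_simps)
    ultimately show ?thesis
      by (simp add: power_mult_distrib power2_eq_square)
  qed
  ultimately show ?thesis
    by simp
qed

end

lemma convex_on_complement_mult_ratio:
  fixes F F' F'' :: "real \<Rightarrow> real" and b :: real
  assumes b: "b > 0"
    and F': "\<And>x. x \<in> {0<..<1} \<Longrightarrow> (F has_field_derivative F' x) (at x)"
    and F'': "\<And>x. x \<in> {0<..<1} \<Longrightarrow> (F' has_field_derivative F'' x) (at x)"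
    and F_nonneg: "\<And>x. x \<in> {0<..<1} \<Longrightarrow> F x \<ge> 0"
    and F'_nonpos: "\<And>x. x \<in> {0<..<1} \<Longrightarrow> F' x \<le> 0"
    and curvature: "\<And>x. x \<in> {0<..<1} \<Longrightarrow> 2 * (F' x)\<^sup>2 \<le> F'' x * (F x + b)"
  shows "convex_on {0<..<1} (\<lambda>x. (1 - x) * (F x / (F x + b)))"
proof (rule f''_ge0_imp_convex)
  define u' where "u' x = b * F' x / (F x + b)\<^sup>2" for x
  define u'' where "u'' x = b * (F'' x * (F x + b) - 2 * (F' x)\<^sup>2) / (F x + b) ^ 3" for x
  have pos: "F x + b > 0" if "x \<in> {0<..<1}" for x
    using F_nonneg[OF that] b by linarith
  have du: "((\<lambda>x. F x / (F x + b)) has_field_derivative u' x) (at x)" if x: "x \<in> {0<..<1}" for x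
  proof -
    have "((\<lambda>x. F x / (F x + b)) has_field_derivative (F' x * (F x + b) - F x * (F' x + 0)) / (F x + b)\<^sup>2) (at x)"
      using pos[OF x]
      by (auto intro!: derivative_eq_intros F'[OF x] simp: power2_eq_square)
    then show ?thesis
      by (rule DERIV_cong) (simp add: u'_def algebra_simps)
  qed
  have du': "(u' has_field_derivative u'' x) (at x)" if x: "x \<in> {0<..<1}" for x
  proof -
    have "(u' has_field_derivative
            (b * F'' x * (F x + b)\<^sup>2 - b * F' x * (2 * (F' x + 0) * (F x + b))) / ((F x + b)\<^sup>2)\<^sup>2) (at x)"
      unfolding u'_def[abs_def] using pos[OF x]
      by (auto intro!: derivative_eq_intros F'[OF x] F''[OF x] simp: power2_eq_square)
    moreover have "(b * d2 * H\<^sup>2 - b * d1 * (2 * (d1 + 0) * H)) / (H\<^sup>2)\<^sup>2 = b * (d2 * H - 2 * d1\<^sup>2) / H ^ 3"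
      if "H \<noteq> 0" for H d1 d2 :: real
      using that by (simp add: field_simps power2_eq_square power3_eq_cube)
    ultimately show ?thesis
      using pos[OF x] by (simp add: u''_def)
  qed
  show "convex {0<..<1::real}"
    by simp
  show "((\<lambda>x. (1 - x) * (F x / (F x + b))) has_field_derivative - (F x / (F x + b)) + (1 - x) * u' x) (at x)"
    if "x \<in> {0<..<1}" for x
    using DERIV_mult[OF DERIV_diff[OF DERIV_const DERIV_ident] du[OF that]]
    by (rule DERIV_cong) (simp add: algebra_simps)
  show "((\<lambda>x. - (F x / (F x + b)) + (1 - x) * u' x) has_field_derivative - 2 * u' x + (1 - x) * u'' x) (at x)"
    if "x \<in> {0<..<1}" for x
    using DERIV_add[OF DERIV_minus[OF du[OF that]] DERIV_mult[OF DERIV_diff[OF DERIV_const DERIV_ident] du'[OF that]]]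
    by (rule DERIV_cong) (simp add: algebra_simps)
  show "- 2 * u' x + (1 - x) * u'' x \<ge> 0" if x: "x \<in> {0<..<1}" for x
  proof -
    have "u' x \<le> 0"
      using F'_nonpos[OF x] b by (simp add: u'_def divide_nonpos_nonneg mult_nonneg_nonpos)
    moreover have "u'' x \<ge> 0"
      using curvature[OF x] pos[OF x] b by (simp add: u''_def)
    moreover have "1 - x \<ge> 0"
      using x by simp
    ultimately show ?thesis
      by (smt (verit) mult_nonneg_nonneg)
  qed
qed

theorem mainTheorem7:
  fixes \<mu> Ts Tw :: real and Qw :: nat
  assumes "\<mu> > 0" and "Ts > 0" and "Tw > 0" and "Qw \<ge> 1"
  defines "f \<equiv> eee_f \<mu> Ts Qw" and "b \<equiv> Ts + Tw"
  shows "(\<forall>\<rho>\<in>{0<..<1}. deriv (deriv f) \<rho> * (f \<rho> + b) \<ge> 2 * (deriv f \<rho>)\<^sup>2)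
       \<and> (\<forall>\<sigma>. 0 \<le> \<sigma> \<and> \<sigma> < 1 \<longrightarrow> concave_on {0<..<1} (eee_E \<mu> Ts Tw Qw \<sigma>))"
proof -
  obtain m where Qw: "Qw = Suc m"
    using assms(4) by (cases Qw) auto
  interpret convex_scaled_ratio "poisson_shortfall (Suc m)"
      "\<lambda>x. - (exp (- x) * exp_partial_sum (Suc m) x)" "\<lambda>x. exp (- x) * x ^ m / fact m" Ts "\<mu> * Ts" f
    using assms has_field_derivative_poisson_shortfall has_field_derivative_neg_exp_times_partial_sum
      poisson_shortfall_nonneg exp_neg_times_partial_sum_le_1 exp_partial_sum_nonneg
    by unfold_locales (auto simp: f_def Qw eee_f_eq_poisson_shortfall)
  have curvature: "\<forall>\<rho>\<in>{0<..<1}. deriv (deriv f) \<rho> * (f \<rho> + b) \<ge> 2 * (deriv f \<rho>)\<^sup>2"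
    using curvature_inequality assms(3) by (simp add: b_def)
  have "concave_on {0<..<1} (eee_E \<mu> Ts Tw Qw \<sigma>)" if "0 \<le> \<sigma>" "\<sigma> < 1" for \<sigma>
  proof -
    have "convex_on {0<..<1} (\<lambda>\<rho>. (1 - \<rho>) * (f \<rho> / (f \<rho> + b)))"
      using assms curvature f_has_derivative_deriv deriv_f_has_derivative_deriv f_nonneg deriv_f_nonpos
      by (intro convex_on_complement_mult_ratio[where F' = "deriv f" and F'' = "deriv (deriv f)"])
         (auto simp: b_def)
    then have "concave_on {0<..<1} (\<lambda>\<rho>. 1 - (1 - \<sigma>) * ((1 - \<rho>) * (f \<rho> / (f \<rho> + b))))"
      using that by (intro concave_on_diff concave_on_const[THEN iffD2] convex_on_cmul) auto
    moreover have "eee_E \<mu> Ts Tw Qw \<sigma> = (\<lambda>\<rho>. 1 - (1 - \<sigma>) * ((1 - \<rho>) * (f \<rho> / (f \<rho> + b))))"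
      by (simp add: fun_eq_iff eee_E_def f_def b_def add.assoc mult.assoc)
    ultimately show ?thesis
      by simp
  qed
  with curvature show ?thesis
    by blast
qed

end
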